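(* Let $S$ be a numerical semigroup with Frobenius number $F$ and $\mathrm{l}(S)\ge 2$. Then $\mathrm{h}(S)$ is defined, $S\cup\{\mathrm{h}(S)\}$ is a numerical semigroup with Frobenius number $F$, and $\mathrm{l}(S\cup\{\mathrm{h}(S)\})=\mathrm{l}(S)-2$.
   Context: A numerical semigroup is a subset $S\subseteq\mathbb{N}$ closed under addition with $0\in S$ and $\mathbb{N}\setminus S$ finite; $\mathrm{F}(S)=\max(\mathbb{Z}\setminus S)$. $\mathrm{N}(S)=\{s\in S\mid s<\mathrm{F}(S)\}$, $\mathrm{L}(S)=\{x\in\mathbb{N}\setminus S\mid \mathrm{F}(S)-x\notin \mathrm{N}(S)\}$, $\mathrm{l}(S)=\#\mathrm{L}(S)$. For a numerical semigroup $S$ with $\mathrm{l}(S)\ge2$, $\mathrm{h}(S)=\max\{x\in\mathbb{N}\setminus S\mid \mathrm{F}(S)-x\in\mathbb{N}\setminus S,\ x\ne \mathrm{F}(S)/2\}$ (which equals $\max\mathrm{L}(S)$). *)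

theory Defs
  imports Main
begin

definition numerical_semigroup :: "nat set \<Rightarrow> bool" where
  "numerical_semigroup S \<longleftrightarrow> 0 \<in> S \<and> (\<forall>a\<in>S. \<forall>b\<in>S. a + b \<in> S) \<and> finite (UNIV - S)"

text \<open>Frobenius number: max of the integers not in S (negative integers are never in S);
  equals -1 when S is all of the naturals.\<close>
definition frob :: "nat set \<Rightarrow> int" where
  "frob S = (if UNIV - S = {} then -1 else int (Max (UNIV - S)))"

definition NS :: "nat set \<Rightarrow> nat set" where
  "NS S = {s \<in> S. int s < frob S}"

definition LS :: "nat set \<Rightarrow> nat set" where
  "LS S = {x. x \<notin> S \<and> \<not> (\<exists>n\<in>NS S. int n = frob S - int x)}"

definition lS :: "nat set \<Rightarrow> nat" where
  "lS S = card (LS S)"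

definition HS :: "nat set \<Rightarrow> nat set" where
  "HS S = {x. x \<notin> S \<and> (\<exists>y. y \<notin> S \<and> int y = frob S - int x) \<and> 2 * int x \<noteq> frob S}"

definition hS :: "nat set \<Rightarrow> nat" where
  "hS S = Max (HS S)"

end

theory Submission
  imports Defs
begin

text \<open>The gaps \<open>x\<close> with \<open>F - x\<close> also a gap come in pairs \<open>{x, F - x}\<close>, and \<open>L(S)\<close> consists of these
  pairs plus possibly \<open>F/2\<close>; so \<open>l(S) \<ge> 2\<close> forces a genuine pair, and \<open>h = h(S)\<close> is its largest
  element, with \<open>F < 2h\<close>. For \<open>0 \<noteq> s \<in> S\<close> the number \<open>h + s\<close> cannot be a gap: \<open>h + s \<le> F\<close> would
  make \<open>F - (h + s)\<close> a gap (otherwise adding \<open>s\<close> puts \<open>F - h\<close> into \<open>S\<close>), so \<open>h + s\<close> would be a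
  larger element of \<open>H(S)\<close>. Together with \<open>2h > F\<close> this makes \<open>S \<union> {h}\<close> closed under addition.
  Adjoining \<open>h \<noteq> F\<close> keeps \<open>F\<close>, and it removes exactly the pair \<open>{h, F - h}\<close> from \<open>L(S)\<close>.\<close>

lemma numerical_semigroupD:
  assumes "numerical_semigroup S"
  shows "0 \<in> S" "a \<in> S \<Longrightarrow> b \<in> S \<Longrightarrow> a + b \<in> S" "finite (UNIV - S)"
  using assms unfolding numerical_semigroup_def by auto

lemma frob_eq_intE:
  assumes "x \<notin> S"
  obtains f where "frob S = int f"
proof
  show "frob S = int (Max (UNIV - S))" using assms unfolding frob_def by auto
qed

lemma notin_le_frob:
  assumes "finite (UNIV - S)" "frob S = int f" "x \<notin> S"
  shows "x \<le> f"
  using assms Max_ge[OF assms(1), of x] unfolding frob_def by (auto split: if_splits)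

lemma int_eq_diff_iff: "int n = int f - int x \<longleftrightarrow> x \<le> f \<and> n = f - x"
  by arith

lemma LS_eq:
  assumes "numerical_semigroup S" "frob S = int f"
  shows "LS S = {x. x \<notin> S \<and> x \<le> f \<and> f - x \<notin> S}"
proof -
  have le: "x \<le> f" if "x \<notin> S" for x
    using notin_le_frob[OF numerical_semigroupD(3)[OF assms(1)] assms(2) that] .
  have pos: "0 < x" if "x \<notin> S" for x
    using that numerical_semigroupD(1)[OF assms(1)] by (cases x) auto
  show ?thesis
    unfolding LS_def NS_def assms(2) int_eq_diff_iff using le pos by fastforce
qed

lemma HS_eq:
  assumes "numerical_semigroup S" "frob S = int f"
  shows "HS S = {x \<in> LS S. 2 * x \<noteq> f}"
proof -
  have "x \<le> f" if "x \<notin> S" for x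
    using notin_le_frob[OF numerical_semigroupD(3)[OF assms(1)] assms(2) that] .
  then have "HS S = {x. x \<notin> S \<and> x \<le> f \<and> f - x \<notin> S \<and> 2 * x \<noteq> f}"
    unfolding HS_def assms(2) int_eq_diff_iff by auto
  then show ?thesis unfolding LS_eq[OF assms] by auto
qed

lemma finite_LS:
  assumes "numerical_semigroup S"
  shows "finite (LS S)"
  using numerical_semigroupD(3)[OF assms] by (rule finite_subset[rotated]) (auto simp: LS_def)

lemma HS_nonempty:
  assumes "numerical_semigroup S" "frob S = int f" "lS S \<ge> 2"
  shows "HS S \<noteq> {}"
proof
  assume "HS S = {}"
  then have "LS S \<subseteq> {f div 2}" unfolding HS_eq[OF assms(1,2)] by auto
  then have "card (LS S) \<le> 1" using card_mono[of "{f div 2}"] by fastforce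
  then show False using assms(3) unfolding lS_def by simp
qed

lemma frob_diff_mem_HS:
  assumes "numerical_semigroup S" "frob S = int f" "x \<in> HS S"
  shows "f - x \<in> HS S"
  using assms(3) unfolding HS_eq[OF assms(1,2)] LS_eq[OF assms(1,2)] by auto

lemma
  assumes "numerical_semigroup S" "frob S = int f" "HS S \<noteq> {}"
  shows hS_mem_HS: "hS S \<in> HS S"
    and mem_HS_le_hS: "x \<in> HS S \<Longrightarrow> x \<le> hS S"
proof -
  have "finite (HS S)"
    using finite_LS[OF assms(1)] unfolding HS_eq[OF assms(1,2)] by auto
  then show "hS S \<in> HS S" "x \<in> HS S \<Longrightarrow> x \<le> hS S"
    unfolding hS_def using Max_in assms(3) by auto
qed

lemma frob_less_double_hS:
  assumes "numerical_semigroup S" "frob S = int f" "HS S \<noteq> {}"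
  shows "f < 2 * hS S"
proof -
  have "f - hS S \<le> hS S"
    using mem_HS_le_hS[OF assms frob_diff_mem_HS[OF assms(1,2) hS_mem_HS[OF assms]]] .
  moreover have "2 * hS S \<noteq> f"
    using hS_mem_HS[OF assms] unfolding HS_eq[OF assms(1,2)] by auto
  ultimately show ?thesis by linarith
qed

lemma hS_add_mem:
  assumes S: "numerical_semigroup S" and f: "frob S = int f" and ne: "HS S \<noteq> {}"
    and "s \<in> S" "s \<noteq> 0"
  shows "hS S + s \<in> S"
proof (rule ccontr)
  let ?h = "hS S"
  assume gap: "?h + s \<notin> S"
  have le: "?h + s \<le> f"
    using notin_le_frob[OF numerical_semigroupD(3)[OF S] f gap] .
  have "f - ?h \<notin> S"
    using hS_mem_HS[OF S f ne] unfolding HS_eq[OF S f] LS_eq[OF S f] by auto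
  moreover have "f - ?h = (f - (?h + s)) + s" using le by simp
  ultimately have "f - (?h + s) \<notin> S"
    using numerical_semigroupD(2)[OF S _ \<open>s \<in> S\<close>] by metis
  then have "?h + s \<in> HS S"
    using gap le frob_less_double_hS[OF S f ne]
    unfolding HS_eq[OF S f] LS_eq[OF S f] by auto
  then show False using mem_HS_le_hS[OF S f ne] \<open>s \<noteq> 0\<close> by fastforce
qed

lemma numerical_semigroup_insert:
  assumes S: "numerical_semigroup S"
    and "\<And>s. s \<in> S \<Longrightarrow> s \<noteq> 0 \<Longrightarrow> h + s \<in> S" and "h + h \<in> S"
  shows "numerical_semigroup (insert h S)"
proof -
  have hs: "h + s \<in> insert h S" if "s \<in> S" for s
    using assms(2)[OF that] by (cases "s = 0") auto
  have "a + b \<in> insert h S" if "a \<in> insert h S" "b \<in> insert h S" for a b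
  proof -
    from that consider "a = h" "b = h" | "a = h" "b \<in> S" | "a \<in> S" "b = h" | "a \<in> S" "b \<in> S"
      by blast
    then show ?thesis
      using assms(3) hs numerical_semigroupD(2)[OF S] by cases (auto simp: add.commute)
  qed
  moreover have "finite (UNIV - insert h S)"
    using numerical_semigroupD(3)[OF S] by (rule finite_subset[rotated]) auto
  ultimately show ?thesis
    using numerical_semigroupD(1)[OF S] unfolding numerical_semigroup_def by blast
qed

lemma frob_insert:
  assumes fin: "finite (UNIV - S)" and "int h \<noteq> frob S"
  shows "frob (insert h S) = frob S"
proof (cases "UNIV - S = {}")
  case True
  then have "S = UNIV" by blast
  then show ?thesis by simp
next
  case False
  let ?m = "Max (UNIV - S)"
  have gaps: "UNIV - insert h S = (UNIV - S) - {h}" by auto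
  have m: "?m \<in> UNIV - insert h S"
    using Max_in[OF fin False] assms(2) False unfolding gaps frob_def by auto
  have "Max (UNIV - insert h S) = ?m"
    using fin m unfolding gaps by (intro Max_eqI) auto
  with m show ?thesis unfolding frob_def by auto
qed

lemma LS_insert:
  assumes "numerical_semigroup S" "numerical_semigroup (insert h S)"
    and "frob S = int f" "frob (insert h S) = int f" "h \<le> f"
  shows "LS (insert h S) = LS S - {h, f - h}"
  unfolding LS_eq[OF assms(1,3)] LS_eq[OF assms(2,4)] using assms(5) by auto

theorem lemma9:
  fixes S :: "nat set"
  assumes "numerical_semigroup S" and "lS S \<ge> 2"
  shows "HS S \<noteq> {} \<and> numerical_semigroup (insert (hS S) S)
         \<and> frob (insert (hS S) S) = frob S
         \<and> lS (insert (hS S) S) = lS S - 2"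
proof -
  note S = assms(1) and fin = numerical_semigroupD(3)[OF assms(1)]
  let ?h = "hS S" and ?T = "insert (hS S) S"
  obtain x where "x \<in> LS S" using assms(2) unfolding lS_def by fastforce
  then obtain f where f: "frob S = int f" using frob_eq_intE by (auto simp: LS_def)
  have ne: "HS S \<noteq> {}" using HS_nonempty[OF S f assms(2)] .
  have h: "?h \<in> LS S" "?h \<noteq> f - ?h" "?h \<le> f" "f - ?h \<in> LS S"
    using hS_mem_HS[OF S f ne] frob_diff_mem_HS[OF S f hS_mem_HS[OF S f ne]]
    unfolding HS_eq[OF S f] LS_eq[OF S f] by auto
  then have pair: "{?h, f - ?h} \<subseteq> LS S" "card {?h, f - ?h} = 2" by auto
  have "?h + ?h \<in> S"
    using notin_le_frob[OF fin f] frob_less_double_hS[OF S f ne] by fastforce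
  then have T: "numerical_semigroup ?T"
    using numerical_semigroup_insert[OF S hS_add_mem[OF S f ne]] by blast
  have "?h \<noteq> f" using h(4) numerical_semigroupD(1)[OF S] unfolding LS_def by auto
  then have frobT: "frob ?T = frob S" using frob_insert[OF fin] f by simp
  have "lS ?T = lS S - 2"
    using card_Diff_subset[OF _ pair(1)] pair(2) finite_LS[OF S]
    unfolding lS_def LS_insert[OF S T f frobT[unfolded f] h(3)] by simp
  with ne T frobT show ?thesis by blast
qed

end
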